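(* Suppose $f:2^E\times O^E\to\mathbb{R}_{\ge0}$ satisfies: (1) for every $e\in E$ and every partial realization $\psi$ (with positive probability) with $e\notin\mathrm{dom}(\psi)$, $O(e,\psi)=O(e,\emptyset)$; (2) $f$ is pointwise submodular and pointwise monotone with respect to $p(\phi)$; (3) $f$ satisfies minimal dependency. Then $f$ is worst-case monotone and worst-case submodular with respect to $p(\phi)$ (and satisfies minimal dependency).
   Context: Setting. $E$ is a finite set of $n$ items and $O$ a finite set of states. A realization is a function $\phi:E\to O$; $p$ is a probability distribution (prior) on the set of all realizations, $\Phi$ denotes a random realization with law $p$, and $U^+=\{\phi: p(\phi)>0\}$. A partial realization is a function $\psi:S\to O$ with $S\subseteq E$, $\mathrm{dom}(\psi)=S$; it is identified with the set of pairs $\{(e,\psi(e)):e\in S\}$, so $\psi\subseteq\psi'$ means $\mathrm{dom}(\psi)\subseteq\mathrm{dom}(\psi')$ and they agree on $\mathrm{dom}(\psi)$. A realization $\phi$ is consistent with $\psi$, written $\phi\sim\psi$, if it agrees with $\psi$ on $\mathrm{dom}(\psi)$. Only partial realizations with $\Pr[\Phi\sim\psi]>0$ are considered, and $p(\phi\mid\psi)=\Pr[\Phi=\phi\mid\Phi\sim\psi]$. For $S\subseteq E$ and a partial realization $\psi$, $f(S,\psi)=\mathbb{E}[f(S,\Phi)\mid\Phi\sim\psi]$. For $e\notin\mathrm{dom}(\psi)$, let $O(e,\psi)=\{o\in O:\exists\phi\text{ with }p(\phi\mid\psi)>0,\ \phi(e)=o\}$ and define the worst-case marginal utility $f_{wc}(e\mid\psi)=\min_{o\in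 O(e,\psi)}\{f(\mathrm{dom}(\psi)\cup\{e\},\psi\cup\{(e,o)\})-f(\mathrm{dom}(\psi),\psi)\}$. $f$ is worst-case submodular if $f_{wc}(e\mid\psi)\ge f_{wc}(e\mid\psi')$ for all partial realizations $\psi\subseteq\psi'$ and all $e\in E\setminus\mathrm{dom}(\psi')$; it is worst-case monotone if $f_{wc}(e\mid\psi)\ge0$ for all $\psi$ and $e\notin\mathrm{dom}(\psi)$. $f$ satisfies minimal dependency if $f(\mathrm{dom}(\psi),\psi)=f(\mathrm{dom}(\psi),\phi)$ for every partial realization $\psi$ and every $\phi\in U^+$ with $\phi\sim\psi$. $f$ is pointwise submodular (resp. pointwise monotone) if for every $\phi\in U^+$ the set function $S\mapsto f(S,\phi)$ is submodular (resp. monotone nondecreasing). *)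

theory Defs
  imports Complex_Main
begin

text \<open>Items are the finite type 'e (so E = UNIV), states the finite type 'o.
 A realization is a total function 'e => 'o, a prior is p :: ('e => 'o) => real,
 a partial realization is a map 'e => 'o option (dom psi is its domain).
 f :: 'e set => ('e => 'o) => real is the utility.\<close>

definition prior :: "(('e::finite \<Rightarrow> 'o::finite) \<Rightarrow> real) \<Rightarrow> bool" where
  "prior p \<longleftrightarrow> (\<forall>\<phi>. 0 \<le> p \<phi>) \<and> (\<Sum>\<phi>\<in>UNIV. p \<phi>) = 1"

definition consistent :: "('e \<Rightarrow> 'o) \<Rightarrow> ('e \<rightharpoonup> 'o) \<Rightarrow> bool" where
  "consistent \<phi> \<psi> \<longleftrightarrow> (\<forall>e\<in>dom \<psi>. \<psi> e = Some (\<phi> e))"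

definition prob_cons :: "(('e::finite \<Rightarrow> 'o::finite) \<Rightarrow> real) \<Rightarrow> ('e \<rightharpoonup> 'o) \<Rightarrow> real" where
  "prob_cons p \<psi> = (\<Sum>\<phi>\<in>{\<phi>. consistent \<phi> \<psi>}. p \<phi>)"

definition cond_prob :: "(('e::finite \<Rightarrow> 'o::finite) \<Rightarrow> real) \<Rightarrow> ('e \<Rightarrow> 'o) \<Rightarrow> ('e \<rightharpoonup> 'o) \<Rightarrow> real" where
  "cond_prob p \<phi> \<psi> = (if consistent \<phi> \<psi> then p \<phi> / prob_cons p \<psi> else 0)"

definition f_partial :: "(('e::finite \<Rightarrow> 'o::finite) \<Rightarrow> real) \<Rightarrow> ('e set \<Rightarrow> ('e \<Rightarrow> 'o) \<Rightarrow> real)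
    \<Rightarrow> 'e set \<Rightarrow> ('e \<rightharpoonup> 'o) \<Rightarrow> real" where
  "f_partial p f S \<psi> = (\<Sum>\<phi>\<in>UNIV. cond_prob p \<phi> \<psi> * f S \<phi>)"

definition states_of :: "(('e::finite \<Rightarrow> 'o::finite) \<Rightarrow> real) \<Rightarrow> 'e \<Rightarrow> ('e \<rightharpoonup> 'o) \<Rightarrow> 'o set" where
  "states_of p e \<psi> = {s. \<exists>\<phi>. cond_prob p \<phi> \<psi> > 0 \<and> \<phi> e = s}"

definition f_wc :: "(('e::finite \<Rightarrow> 'o::finite) \<Rightarrow> real) \<Rightarrow> ('e set \<Rightarrow> ('e \<Rightarrow> 'o) \<Rightarrow> real)
    \<Rightarrow> 'e \<Rightarrow> ('e \<rightharpoonup> 'o) \<Rightarrow> real" where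
  "f_wc p f e \<psi> = Min ((\<lambda>s. f_partial p f (dom \<psi> \<union> {e}) (\<psi>(e \<mapsto> s)) - f_partial p f (dom \<psi>) \<psi>)
                       ` states_of p e \<psi>)"

definition worst_case_submodular where
  "worst_case_submodular p f \<longleftrightarrow>
     (\<forall>\<psi> \<psi>' e. prob_cons p \<psi> > 0 \<longrightarrow> prob_cons p \<psi>' > 0 \<longrightarrow> \<psi> \<subseteq>\<^sub>m \<psi>' \<longrightarrow> e \<notin> dom \<psi>'
        \<longrightarrow> f_wc p f e \<psi> \<ge> f_wc p f e \<psi>')"

definition worst_case_monotone where
  "worst_case_monotone p f \<longleftrightarrow>
     (\<forall>\<psi> e. prob_cons p \<psi> > 0 \<longrightarrow> e \<notin> dom \<psi> \<longrightarrow> f_wc p f e \<psi> \<ge> 0)"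

definition minimal_dependency where
  "minimal_dependency p f \<longleftrightarrow>
     (\<forall>\<psi> \<phi>. prob_cons p \<psi> > 0 \<longrightarrow> p \<phi> > 0 \<longrightarrow> consistent \<phi> \<psi>
        \<longrightarrow> f_partial p f (dom \<psi>) \<psi> = f (dom \<psi>) \<phi>)"

definition pointwise_submodular where
  "pointwise_submodular p f \<longleftrightarrow>
     (\<forall>\<phi>. p \<phi> > 0 \<longrightarrow> (\<forall>A B e. A \<subseteq> B \<longrightarrow> e \<notin> B \<longrightarrow>
        f (A \<union> {e}) \<phi> - f A \<phi> \<ge> f (B \<union> {e}) \<phi> - f B \<phi>))"

definition pointwise_monotone where
  "pointwise_monotone p f \<longleftrightarrow>
     (\<forall>\<phi>. p \<phi> > 0 \<longrightarrow> (\<forall>A B. A \<subseteq> B \<longrightarrow> f A \<phi> \<le> f B \<phi>))"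

end

theory Submission
  imports Defs
begin

text \<open>Every state in O(e, \<psi>) is realized by some \<phi> of positive prior
 consistent with \<psi>. By minimal dependency, both conditional utilities in the
 marginal at that state can be evaluated at \<phi> itself, so every adaptive
 marginal is a pointwise marginal f(dom \<psi> \<union> {e}, \<phi>) - f(dom \<psi>, \<phi>).
 Pointwise monotonicity makes all of them nonnegative. For \<psi> \<subseteq> \<psi>', a \<phi>
 consistent with \<psi>' is also consistent with \<psi>, so pointwise submodularity
 compares the marginals at the same state; since O(e, \<psi>) = O(e, \<psi>') the two
 minima range over the same states.\<close>

definition marginal ::
    "(('e::finite \<Rightarrow> 'o::finite) \<Rightarrow> real) \<Rightarrow> ('e set \<Rightarrow> ('e \<Rightarrow> 'o) \<Rightarrow> real)
      \<Rightarrow> 'e \<Rightarrow> ('e \<rightharpoonup> 'o) \<Rightarrow> 'o \<Rightarrow> real" where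
  "marginal p f e \<psi> s = f_partial p f (dom \<psi> \<union> {e}) (\<psi>(e \<mapsto> s)) - f_partial p f (dom \<psi>) \<psi>"

lemma f_wc_eq_Min_marginal: "f_wc p f e \<psi> = Min (marginal p f e \<psi> ` states_of p e \<psi>)"
  by (simp add: f_wc_def marginal_def[abs_def])

lemma Min_image_mono:
  fixes g h :: "'a \<Rightarrow> 'b::linorder"
  assumes "finite A" "A \<noteq> {}" "\<And>x. x \<in> A \<Longrightarrow> g x \<le> h x"
  shows "Min (g ` A) \<le> Min (h ` A)"
proof -
  have "Min (h ` A) \<in> h ` A"
    using assms(1,2) by (intro Min_in) auto
  then obtain x where "x \<in> A" "Min (h ` A) = h x" by auto
  then show ?thesis
    using assms by (metis Min_le dual_order.trans finite_imageI image_eqI)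
qed

lemma consistent_map_le:
  assumes "\<psi> \<subseteq>\<^sub>m \<psi>'" "consistent \<phi> \<psi>'"
  shows "consistent \<phi> \<psi>"
  unfolding consistent_def
proof
  fix x assume "x \<in> dom \<psi>"
  with assms(1) have "\<psi> x = \<psi>' x" "x \<in> dom \<psi>'"
    by (auto simp: map_le_def dom_def)
  with assms(2) show "\<psi> x = Some (\<phi> x)"
    by (simp add: consistent_def)
qed

lemma consistent_map_upd: "consistent \<phi> \<psi> \<Longrightarrow> consistent \<phi> (\<psi>(e \<mapsto> \<phi> e))"
  by (auto simp: consistent_def)

lemma prob_cons_pos:
  assumes "prior p" "p \<phi> > 0" "consistent \<phi> \<psi>"
  shows "prob_cons p \<psi> > 0"
proof -
  have "p \<phi> \<le> prob_cons p \<psi>" unfolding prob_cons_def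
    by (rule member_le_sum) (use assms in \<open>auto simp: prior_def\<close>)
  with assms(2) show ?thesis by linarith
qed

lemma states_of_nonempty:
  assumes "prob_cons p \<psi> > 0"
  shows "states_of p e \<psi> \<noteq> {}"
proof -
  have "\<exists>\<phi>. consistent \<phi> \<psi> \<and> p \<phi> > 0"
  proof (rule ccontr)
    assume "\<nexists>\<phi>. consistent \<phi> \<psi> \<and> p \<phi> > 0"
    then have "prob_cons p \<psi> \<le> 0"
      unfolding prob_cons_def by (intro sum_nonpos) auto
    with assms show False by simp
  qed
  then obtain \<phi> where "consistent \<phi> \<psi>" "p \<phi> > 0" by blast
  with assms have "cond_prob p \<phi> \<psi> > 0" by (simp add: cond_prob_def)
  then show ?thesis by (auto simp: states_of_def)
qed

lemma states_of_witness:
  assumes "prob_cons p \<psi> > 0" "s \<in> states_of p e \<psi>"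
  obtains \<phi> where "p \<phi> > 0" "consistent \<phi> \<psi>" "\<phi> e = s"
proof -
  obtain \<phi> where "cond_prob p \<phi> \<psi> > 0" "\<phi> e = s"
    using assms(2) by (auto simp: states_of_def)
  moreover from assms(1) this(1) have "p \<phi> > 0" "consistent \<phi> \<psi>"
    by (auto simp: cond_prob_def zero_less_divide_iff split: if_splits)
  ultimately show thesis by (intro that)
qed

lemma marginal_eq_pointwise:
  assumes "prior p" "minimal_dependency p f" "p \<phi> > 0" "consistent \<phi> \<psi>"
  shows "marginal p f e \<psi> (\<phi> e) = f (dom \<psi> \<union> {e}) \<phi> - f (dom \<psi>) \<phi>"
proof -
  let ?\<psi>e = "\<psi>(e \<mapsto> \<phi> e)"
  have cons_e: "consistent \<phi> ?\<psi>e"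
    using assms(4) by (rule consistent_map_upd)
  have "f_partial p f (dom ?\<psi>e) ?\<psi>e = f (dom ?\<psi>e) \<phi>"
    using assms(2,3) prob_cons_pos[OF assms(1,3) cons_e] cons_e
    unfolding minimal_dependency_def by blast
  moreover have "f_partial p f (dom \<psi>) \<psi> = f (dom \<psi>) \<phi>"
    using assms(2-4) prob_cons_pos[OF assms(1,3,4)]
    unfolding minimal_dependency_def by blast
  ultimately show ?thesis by (simp add: marginal_def)
qed

lemma worst_case_monotone_if_pointwise_monotone:
  assumes "prior p" "minimal_dependency p f" "pointwise_monotone p f"
  shows "worst_case_monotone p f"
  unfolding worst_case_monotone_def
proof (intro allI impI)
  fix \<psi> e assume pos: "prob_cons p \<psi> > 0" and "e \<notin> dom \<psi>"
  have "marginal p f e \<psi> s \<ge> 0" if s: "s \<in> states_of p e \<psi>" for s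
  proof -
    obtain \<phi> where \<phi>: "p \<phi> > 0" "consistent \<phi> \<psi>" "\<phi> e = s"
      using states_of_witness[OF pos s] .
    have "f (dom \<psi>) \<phi> \<le> f (dom \<psi> \<union> {e}) \<phi>"
      using assms(3) \<phi>(1) unfolding pointwise_monotone_def by blast
    then show ?thesis
      using marginal_eq_pointwise[OF assms(1,2) \<phi>(1,2), of e] \<phi>(3) by simp
  qed
  then show "f_wc p f e \<psi> \<ge> 0"
    using states_of_nonempty[OF pos] by (simp add: f_wc_eq_Min_marginal)
qed

lemma worst_case_submodular_if_pointwise_submodular:
  assumes "prior p" "minimal_dependency p f" "pointwise_submodular p f"
    and states_indep: "\<forall>e \<psi>. prob_cons p \<psi> > 0 \<longrightarrow> e \<notin> dom \<psi>
      \<longrightarrow> states_of p e \<psi> = states_of p e Map.empty"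
  shows "worst_case_submodular p f"
  unfolding worst_case_submodular_def
proof (intro allI impI)
  fix \<psi> \<psi>' e
  assume pos: "prob_cons p \<psi> > 0" and pos': "prob_cons p \<psi>' > 0"
    and le: "\<psi> \<subseteq>\<^sub>m \<psi>'" and e': "e \<notin> dom \<psi>'"
  have dom_le: "dom \<psi> \<subseteq> dom \<psi>'"
    using le by (rule map_le_implies_dom_le)
  with e' have "e \<notin> dom \<psi>" by blast
  with states_indep pos pos' e' have states_eq: "states_of p e \<psi> = states_of p e \<psi>'"
    by metis
  have "marginal p f e \<psi>' s \<le> marginal p f e \<psi> s" if s: "s \<in> states_of p e \<psi>'" for s
  proof -
    obtain \<phi> where \<phi>: "p \<phi> > 0" "consistent \<phi> \<psi>'" "\<phi> e = s"
      using states_of_witness[OF pos' s] .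
    have "consistent \<phi> \<psi>"
      using le \<phi>(2) by (rule consistent_map_le)
    moreover have "f (dom \<psi>' \<union> {e}) \<phi> - f (dom \<psi>') \<phi> \<le> f (dom \<psi> \<union> {e}) \<phi> - f (dom \<psi>) \<phi>"
      using assms(3) \<phi>(1) dom_le e' unfolding pointwise_submodular_def by blast
    ultimately show ?thesis
      using marginal_eq_pointwise[OF assms(1,2) \<phi>(1)] \<phi>(2,3) by metis
  qed
  then show "f_wc p f e \<psi>' \<le> f_wc p f e \<psi>"
    unfolding f_wc_eq_Min_marginal states_eq
    using states_of_nonempty[OF pos'] by (intro Min_image_mono) auto
qed

theorem proposition2:
  fixes p :: "('e::finite \<Rightarrow> 'o::finite) \<Rightarrow> real"
    and f :: "'e set \<Rightarrow> ('e \<Rightarrow> 'o) \<Rightarrow> real"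
  assumes "prior p"
    and "\<forall>S \<phi>. f S \<phi> \<ge> 0"
    and "\<forall>e \<psi>. prob_cons p \<psi> > 0 \<longrightarrow> e \<notin> dom \<psi> \<longrightarrow> states_of p e \<psi> = states_of p e Map.empty"
    and "pointwise_submodular p f" and "pointwise_monotone p f"
    and "minimal_dependency p f"
  shows "worst_case_monotone p f \<and> worst_case_submodular p f \<and> minimal_dependency p f"
  using worst_case_monotone_if_pointwise_monotone[OF assms(1,6,5)]
    worst_case_submodular_if_pointwise_submodular[OF assms(1,6,4,3)] assms(6)
  by blast

end
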